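(* In the Setting, suppose that $r=\sqrt{K-\lambda_1}$ and $s=-\sqrt{K-\lambda_1}$. Then $c=m$ and \[ v=\frac{(-s)(n^2-1)}{n+s},\quad k=(-s)n,\quad \lambda=\mu=(-s)(n+s). \]
   Context: Setting: $\Gamma$ is a primitive strongly regular graph with parameters $(v,k,\lambda,\mu)$ (a $k$-regular graph on $v$ vertices, any two adjacent vertices having $\lambda$ and any two distinct non-adjacent vertices having $\mu$ common neighbours; primitive means $\Gamma$ and its complement are connected), with spectrum $k^1, r^f, s^g$ where $k>r>s$ and exponents are multiplicities. $C$ is a coclique in $\Gamma$ of size $c=\frac{vs}{s-k}$. A $K$-regular graph on $V$ vertices, neither complete nor edgeless, is a divisible design graph with parameters $(V,K,\lambda_1,\lambda_2;m,n)$ if its vertex set can be partitioned into $m$ canonical classes of size $n$ such that two distinct vertices in the same class have exactly $\lambda_1$ common neighbours and two vertices in different classes have exactly $\lambda_2$ common neighbours; it is proper unless $m=1$, $n=1$ or $\lambda_1=\lambda_2$. It is assumed that the subgraph $\Delta$ induced on $V(\Gamma)\setminus C$ is a proper divisible design graph with parameters $(V,K,\lambda_1,\lambda_2;m,n)$. *)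

theory Defs
  imports Complex_Main "HOL-Library.Disjoint_Sets"
begin

definition sgraph :: "'a set \<Rightarrow> ('a \<Rightarrow> 'a \<Rightarrow> bool) \<Rightarrow> bool" where
  "sgraph V E \<longleftrightarrow> finite V \<and> (\<forall>x y. E x y \<longrightarrow> x \<in> V \<and> y \<in> V)
     \<and> (\<forall>x y. E x y \<longrightarrow> E y x) \<and> (\<forall>x. \<not> E x x)"

definition common_nbrs :: "'a set \<Rightarrow> ('a \<Rightarrow> 'a \<Rightarrow> bool) \<Rightarrow> 'a \<Rightarrow> 'a \<Rightarrow> nat" where
  "common_nbrs V E x y = card {w \<in> V. E x w \<and> E y w}"

definition degree :: "'a set \<Rightarrow> ('a \<Rightarrow> 'a \<Rightarrow> bool) \<Rightarrow> 'a \<Rightarrow> nat" where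
  "degree V E x = card {w \<in> V. E x w}"

definition graph_connected :: "'a set \<Rightarrow> ('a \<Rightarrow> 'a \<Rightarrow> bool) \<Rightarrow> bool" where
  "graph_connected V E \<longleftrightarrow> (\<forall>x\<in>V. \<forall>y\<in>V. E\<^sup>*\<^sup>* x y)"

definition complement_graph :: "'a set \<Rightarrow> ('a \<Rightarrow> 'a \<Rightarrow> bool) \<Rightarrow> 'a \<Rightarrow> 'a \<Rightarrow> bool" where
  "complement_graph V E x y \<longleftrightarrow> x \<in> V \<and> y \<in> V \<and> x \<noteq> y \<and> \<not> E x y"

definition induced :: "'a set \<Rightarrow> ('a \<Rightarrow> 'a \<Rightarrow> bool) \<Rightarrow> 'a \<Rightarrow> 'a \<Rightarrow> bool" where
  "induced W E x y \<longleftrightarrow> x \<in> W \<and> y \<in> W \<and> E x y"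

definition strongly_regular :: "'a set \<Rightarrow> ('a \<Rightarrow> 'a \<Rightarrow> bool) \<Rightarrow> nat \<Rightarrow> nat \<Rightarrow> nat \<Rightarrow> nat \<Rightarrow> bool" where
  "strongly_regular V E v k lam mu \<longleftrightarrow> sgraph V E \<and> card V = v
     \<and> (\<forall>x\<in>V. degree V E x = k)
     \<and> (\<forall>x\<in>V. \<forall>y\<in>V. E x y \<longrightarrow> common_nbrs V E x y = lam)
     \<and> (\<forall>x\<in>V. \<forall>y\<in>V. x \<noteq> y \<and> \<not> E x y \<longrightarrow> common_nbrs V E x y = mu)"

definition primitive :: "'a set \<Rightarrow> ('a \<Rightarrow> 'a \<Rightarrow> bool) \<Rightarrow> bool" where
  "primitive V E \<longleftrightarrow> graph_connected V E \<and> graph_connected V (complement_graph V E)"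

definition adj_eigenvalue :: "'a set \<Rightarrow> ('a \<Rightarrow> 'a \<Rightarrow> bool) \<Rightarrow> real \<Rightarrow> bool" where
  "adj_eigenvalue V E \<theta> \<longleftrightarrow> (\<exists>x :: 'a \<Rightarrow> real. (\<exists>u\<in>V. x u \<noteq> 0) \<and>
      (\<forall>u\<in>V. (\<Sum>w\<in>V. if E u w then x w else 0) = \<theta> * x u))"

definition srg_spectrum :: "'a set \<Rightarrow> ('a \<Rightarrow> 'a \<Rightarrow> bool) \<Rightarrow> nat \<Rightarrow> real \<Rightarrow> real \<Rightarrow> bool" where
  "srg_spectrum V E k r s \<longleftrightarrow> {\<theta>. adj_eigenvalue V E \<theta>} = {real k, r, s} \<and> real k > r \<and> r > s"

definition coclique :: "'a set \<Rightarrow> ('a \<Rightarrow> 'a \<Rightarrow> bool) \<Rightarrow> 'a set \<Rightarrow> bool" where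
  "coclique V E C \<longleftrightarrow> C \<subseteq> V \<and> (\<forall>x\<in>C. \<forall>y\<in>C. \<not> E x y)"

definition divisible_design_graph ::
  "'a set \<Rightarrow> ('a \<Rightarrow> 'a \<Rightarrow> bool) \<Rightarrow> nat \<Rightarrow> nat \<Rightarrow> nat \<Rightarrow> nat \<Rightarrow> nat \<Rightarrow> nat \<Rightarrow> bool" where
  "divisible_design_graph W F nv K l1 l2 m n \<longleftrightarrow> sgraph W F \<and> card W = nv
     \<and> (\<forall>x\<in>W. degree W F x = K)
     \<and> (\<exists>x\<in>W. \<exists>y\<in>W. x \<noteq> y \<and> \<not> F x y)
     \<and> (\<exists>x y. F x y)
     \<and> (\<exists>P. partition_on W P \<and> card P = m \<and> (\<forall>X\<in>P. card X = n)
          \<and> (\<forall>X\<in>P. \<forall>x\<in>X. \<forall>y\<in>X. x \<noteq> y \<longrightarrow> common_nbrs W F x y = l1)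
          \<and> (\<forall>X\<in>P. \<forall>Y\<in>P. X \<noteq> Y \<longrightarrow> (\<forall>x\<in>X. \<forall>y\<in>Y. common_nbrs W F x y = l2)))"

definition proper_ddg ::
  "'a set \<Rightarrow> ('a \<Rightarrow> 'a \<Rightarrow> bool) \<Rightarrow> nat \<Rightarrow> nat \<Rightarrow> nat \<Rightarrow> nat \<Rightarrow> nat \<Rightarrow> nat \<Rightarrow> bool" where
  "proper_ddg W F nv K l1 l2 m n \<longleftrightarrow> divisible_design_graph W F nv K l1 l2 m n
     \<and> m \<noteq> 1 \<and> n \<noteq> 1 \<and> l1 \<noteq> l2"

end

theory Submission
  imports Defs
begin

text \<open>Write \<open>a = sqrt (K - l1)\<close>, so that the eigenvalues r and s are a and -a. The quadratic
  equation satisfied by the nontrivial eigenvalues of a strongly regular graph then gives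
  \<open>lam = mu\<close> and \<open>k - mu = a\<^sup>2\<close>. The coclique C attains the Hoffman bound, and the variance
  argument for its equality case shows that every vertex outside C has exactly a neighbours in C;
  hence the graph on the complement has degree \<open>k - a\<close> and \<open>l1 = mu - a\<close>. For a fixed vertex x0
  outside C, the number of common C-neighbours of x0 and another outside vertex y is then a if y
  lies in the canonical class of x0 and a constant \<open>t \<noteq> a\<close> otherwise. Double counting the sum
  and the sum of squares of these numbers gives two equations; eliminating t leaves
  \<open>(a - 1) (k - a n) = 0\<close>, the case \<open>a = 1\<close> is impossible, and \<open>k = a n\<close> determines the
  remaining parameters.\<close>

lemma real_card_filter_eq_sum:
  "finite S \<Longrightarrow> real (card {w\<in>S. P w}) = (\<Sum>w\<in>S. if P w then 1 else 0)"
  by (simp add: sum.If_cases Int_def)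

lemma sum_card_filter_swap:
  assumes "finite Y" "finite Z"
  shows "(\<Sum>y\<in>Y. real (card {w\<in>Z. R y w})) = (\<Sum>w\<in>Z. real (card {y\<in>Y. R y w}))"
  using assms by (simp add: real_card_filter_eq_sum sum.swap[of _ Y Z])

lemma card_filter_Diff_split:
  assumes "finite V" "C \<subseteq> V"
  shows "card {w\<in>V. P w} = card {w\<in>V - C. P w} + card {w\<in>C. P w}"
proof -
  have "{w\<in>V. P w} = {w\<in>V - C. P w} \<union> {w\<in>C. P w}" using assms(2) by blast
  moreover have "card ({w\<in>V - C. P w} \<union> {w\<in>C. P w}) = card {w\<in>V - C. P w} + card {w\<in>C. P w}"
    by (rule card_Un_disjoint) (use assms in \<open>auto intro: rev_finite_subset\<close>)
  ultimately show ?thesis by simp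
qed

lemma sum_three_valued:
  fixes f :: "'a \<Rightarrow> real"
  assumes "finite W" "X \<subseteq> W" "x \<in> X"
    and "f x = \<alpha>" "\<And>y. y \<in> X - {x} \<Longrightarrow> f y = \<beta>" "\<And>y. y \<in> W - X \<Longrightarrow> f y = \<gamma>"
  shows "(\<Sum>y\<in>W. f y) = \<alpha> + (real (card X) - 1) * \<beta> + (real (card W) - real (card X)) * \<gamma>"
proof -
  have fin: "finite X" using assms(1,2) finite_subset by blast
  have "(\<Sum>y\<in>W. f y) = (\<Sum>y\<in>W - X. f y) + (\<Sum>y\<in>X. f y)"
    by (rule sum.subset_diff[OF assms(2,1)])
  also have "(\<Sum>y\<in>X. f y) = f x + (\<Sum>y\<in>X - {x}. f y)"
    by (rule sum.remove[OF fin assms(3)])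
  also have "(\<Sum>y\<in>X - {x}. f y) = (real (card X) - 1) * \<beta>"
  proof -
    have "card X \<ge> 1" using assms(3) fin by (metis One_nat_def Suc_leI card_gt_0_iff empty_iff)
    then show ?thesis using assms(3,5) fin by (simp add: of_nat_diff)
  qed
  also have "(\<Sum>y\<in>W - X. f y) = (real (card W) - real (card X)) * \<gamma>"
    using assms(1,2,6) fin by (simp add: card_Diff_subset card_mono of_nat_diff)
  finally show ?thesis using assms(4) by simp
qed

lemma proper_ddgE:
  assumes "proper_ddg W F nV K l1 l2 m n"
  obtains P where "finite W" "\<And>x. x \<in> W \<Longrightarrow> degree W F x = K"
    "partition_on W P" "card P = m" "\<And>X. X \<in> P \<Longrightarrow> card X = n"
    "\<And>X x y. X \<in> P \<Longrightarrow> x \<in> X \<Longrightarrow> y \<in> X \<Longrightarrow> x \<noteq> y \<Longrightarrow> common_nbrs W F x y = l1"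
    "\<And>X Y x y. X \<in> P \<Longrightarrow> Y \<in> P \<Longrightarrow> X \<noteq> Y \<Longrightarrow> x \<in> X \<Longrightarrow> y \<in> Y \<Longrightarrow> common_nbrs W F x y = l2"
    "m \<noteq> 1" "n \<noteq> 1" "l1 \<noteq> l2" "W \<noteq> {}"
proof -
  have D: "divisible_design_graph W F nV K l1 l2 m n" and ne: "m \<noteq> 1" "n \<noteq> 1" "l1 \<noteq> l2"
    using assms unfolding proper_ddg_def by auto
  have fin: "finite W" and W: "W \<noteq> {}" and deg: "\<And>x. x \<in> W \<Longrightarrow> degree W F x = K"
    using D unfolding divisible_design_graph_def sgraph_def by auto
  obtain P where P: "partition_on W P" "card P = m" "\<And>X. X \<in> P \<Longrightarrow> card X = n"
    "\<And>X x y. X \<in> P \<Longrightarrow> x \<in> X \<Longrightarrow> y \<in> X \<Longrightarrow> x \<noteq> y \<Longrightarrow> common_nbrs W F x y = l1"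
    "\<And>X Y x y. X \<in> P \<Longrightarrow> Y \<in> P \<Longrightarrow> X \<noteq> Y \<Longrightarrow> x \<in> X \<Longrightarrow> y \<in> Y \<Longrightarrow> common_nbrs W F x y = l2"
    using D unfolding divisible_design_graph_def by auto
  show thesis by (rule that[OF fin deg P ne W])
qed

lemma proper_ddg_card:
  assumes "proper_ddg W F nV K l1 l2 m n"
  shows "card W = m * n" "2 \<le> m" "2 \<le> n"
proof -
  obtain P where fin: "finite W" and P: "partition_on W P" "card P = m" "\<And>X. X \<in> P \<Longrightarrow> card X = n"
    and "m \<noteq> 1" "n \<noteq> 1" "W \<noteq> {}"
    using assms by (rule proper_ddgE) blast
  have finX: "finite X" if "X \<in> P" for X
    using that P(1) fin by (metis Sup_upper partition_onD1 rev_finite_subset)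
  show "card W = m * n" using product_partition[OF P(1) finX] P(2,3) by simp
  have "P \<noteq> {}" using \<open>W \<noteq> {}\<close> P(1) by (auto dest: partition_onD1)
  then obtain X where "X \<in> P" by blast
  then have "X \<noteq> {}" using P(1) by (auto dest: partition_onD3)
  then have "n \<noteq> 0" using P(3) finX \<open>X \<in> P\<close> by fastforce
  moreover have "m \<noteq> 0" using \<open>P \<noteq> {}\<close> P(2) finite_elements[OF fin P(1)] by (metis card_0_eq)
  ultimately show "2 \<le> m" "2 \<le> n" using \<open>m \<noteq> 1\<close> \<open>n \<noteq> 1\<close> by auto
qed

lemma quadratic_common_roots:
  fixes r s A B :: real
  assumes "r\<^sup>2 = A + B * r" "s\<^sup>2 = A + B * s" "r \<noteq> s"
  shows "B = r + s" "A = - (r * s)"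
proof -
  have "(r - s) * (r + s) = (r - s) * B"
    using assms(1,2) by (simp add: algebra_simps power2_eq_square)
  then show "B = r + s" using assms(3) by simp
  then show "A = - (r * s)" using assms(1) by (simp add: algebra_simps power2_eq_square)
qed

text \<open>In the application, a is the number of neighbours in the coclique C of every vertex outside C,
  c and N are the sizes of C and of its complement, and t is the number of common C-neighbours of two
  vertices in different canonical classes; the two count equations are the first and second moments of
  the number of common C-neighbours of a fixed outside vertex with all outside vertices.\<close>

lemma two_level_counts_factor:
  fixes a k mu N n t :: real
  assumes "mu = k - a\<^sup>2" "mu * N = k * (k - a)"
    and "n * a + (N - n) * t = a * k"
    and "n * a\<^sup>2 + (N - n) * t\<^sup>2 = a * (mu * a + k - mu)"
  shows "a ^ 4 * ((a - 1) * (k - a * n)) = 0"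
proof -
  have sq: "(N - n) * ((N - n) * t\<^sup>2) = ((N - n) * t)\<^sup>2" by (simp add: power2_eq_square)
  have "(N - n) * t = a * (k - n)" using assms(3) by (simp add: algebra_simps)
  moreover have "(N - n) * t\<^sup>2 = a * (mu * a + k - mu) - n * a\<^sup>2" using assms(4) by simp
  ultimately have "(N - n) * (a * (mu * a + k - mu) - n * a\<^sup>2) = (a * (k - n))\<^sup>2"
    using sq by simp
  moreover have "mu * (N - n) = k * (k - a) - mu * n" using assms(2) by (simp add: algebra_simps)
  ultimately have "(k * (k - a) - mu * n) * (a * (mu * a + k - mu) - n * a\<^sup>2) = mu * (a * (k - n))\<^sup>2"
    by (metis mult.assoc)
  moreover have "(k * (k - a) - mu * n) * (a * (mu * a + k - mu) - n * a\<^sup>2) - mu * (a * (k - n))\<^sup>2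
      = a ^ 4 * ((a - 1) * (k - a * n))"
    unfolding assms(1) by (simp add: algebra_simps power2_eq_square power4_eq_xxxx)
  ultimately show ?thesis by simp
qed

lemma two_level_counts_k:
  fixes a k mu c N m n t :: real
  assumes a: "0 < a" and mu: "mu = k - a\<^sup>2" and cmu: "c * mu = a * (k - a)"
    and Na: "N * a = c * k" and N: "N = m * n" and m: "2 \<le> m" and n: "2 \<le> n" and t: "t \<noteq> a"
    and e1: "n * a + (N - n) * t = a * k"
    and e2: "n * a\<^sup>2 + (N - n) * t\<^sup>2 = a * (mu * a + k - mu)"
  shows "k = a * n"
proof -
  have "a * (mu * N) = a * (k * (k - a))"
    using Na cmu by (metis mult.commute mult.left_commute)
  then have muN: "mu * N = k * (k - a)" using a by simp
  have "a \<noteq> 1"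
  proof
    assume a1: "a = 1"
    have "N - n = (m - 1) * n" using N by (simp add: algebra_simps)
    then have "N - n > 0" using m n by simp
    moreover have "(N - n) * t = (N - n) * t\<^sup>2" using e1 e2 mu a1 by (simp add: algebra_simps)
    ultimately have "t = t\<^sup>2" by simp
    then have "t * (t - 1) = 0" by (simp add: power2_eq_square algebra_simps)
    then have "t = 0" using t a1 by simp
    then have "k = n" using e1 a1 by simp
    then have "c * (k - 1) = 1 * (k - 1)" "k \<noteq> 1" using cmu mu a1 n by simp_all
    then have "c = 1" by simp
    then have "N = n" using Na a1 \<open>k = n\<close> by simp
    then show False using N m n by simp
  qed
  then show ?thesis using two_level_counts_factor[OF mu muN e1 e2] a by simp
qed

lemma ddg_parameters_from_counts:
  fixes a k mu c v N m n t :: real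
  assumes a: "0 < a" and mu: "mu = k - a\<^sup>2" and cmu: "c * mu = a * (k - a)"
    and Na: "N * a = c * k" and v: "v = N + c" and N: "N = m * n"
    and m: "2 \<le> m" and n: "2 \<le> n" and t: "t \<noteq> a"
    and e1: "n * a + (N - n) * t = a * k"
    and e2: "n * a\<^sup>2 + (N - n) * t\<^sup>2 = a * (mu * a + k - mu)"
  shows "c = m \<and> v = a * (n\<^sup>2 - 1) / (n - a) \<and> k = a * n \<and> mu = a * (n - a)"
proof -
  have k: "k = a * n" by (rule two_level_counts_k[OF a mu cmu Na N m n t e1 e2])
  have mu_an: "mu = a * (n - a)" using mu k by (simp add: algebra_simps power2_eq_square)
  have "a * (c * (n - a)) = a * (a * (n - 1))"
    using cmu mu_an k by (simp add: algebra_simps)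
  then have cna: "c * (n - a) = a * (n - 1)" using a by simp
  then have "n \<noteq> a" using a n by auto
  have "a * N = a * (c * n)" using Na k by (simp add: algebra_simps)
  then have Ncn: "N = c * n" using a by simp
  then have "c = m" using N n by simp
  moreover have "v = a * (n\<^sup>2 - 1) / (n - a)"
  proof -
    have "v * (n - a) = (n + 1) * (c * (n - a))" using v Ncn by (simp add: algebra_simps)
    also have "\<dots> = a * (n\<^sup>2 - 1)" unfolding cna by (simp add: algebra_simps power2_eq_square)
    finally show ?thesis using \<open>n \<noteq> a\<close> by (simp add: field_simps)
  qed
  ultimately show ?thesis using k mu_an by simp
qed

locale srg =
  fixes V :: "'a set" and E :: "'a \<Rightarrow> 'a \<Rightarrow> bool" and v k lam mu :: nat
  assumes strongly_regular: "strongly_regular V E v k lam mu"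
begin

lemma finite_V: "finite V"
  and card_V: "card V = v"
  and adj_in_V: "E x y \<Longrightarrow> x \<in> V" "E x y \<Longrightarrow> y \<in> V"
  and adj_sym: "E x y \<Longrightarrow> E y x"
  and adj_irrefl: "\<not> E x x"
  and card_nbrs: "x \<in> V \<Longrightarrow> card {w\<in>V. E x w} = k"
  using strongly_regular unfolding strongly_regular_def sgraph_def degree_def by blast+

lemma card_common_nbrs:
  assumes "x \<in> V" "y \<in> V"
  shows "card {w\<in>V. E x w \<and> E y w} = (if x = y then k else if E x y then lam else mu)"
  using assms strongly_regular card_nbrs[of x]
  unfolding strongly_regular_def common_nbrs_def by auto

definition adj :: "('a \<Rightarrow> real) \<Rightarrow> 'a \<Rightarrow> real" where
  "adj f u = (\<Sum>w\<in>V. if E u w then f w else 0)"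

lemma adj_eigenvalue_iff:
  "adj_eigenvalue V E \<theta> \<longleftrightarrow> (\<exists>f. (\<exists>u\<in>V. f u \<noteq> 0) \<and> (\<forall>u\<in>V. adj f u = \<theta> * f u))"
  unfolding adj_eigenvalue_def adj_def ..

lemma adj_cong: "(\<And>w. w \<in> V \<Longrightarrow> f w = g w) \<Longrightarrow> adj f u = adj g u"
  unfolding adj_def by (rule sum.cong) auto

lemma adj_scale: "adj (\<lambda>w. c * f w) u = c * adj f u"
  unfolding adj_def by (simp add: sum_distrib_left if_distrib cong: if_cong)

lemma sum_adj: "(\<Sum>u\<in>V. adj f u) = real k * (\<Sum>w\<in>V. f w)"
proof -
  have "(\<Sum>u\<in>V. adj f u) = (\<Sum>w\<in>V. \<Sum>u\<in>V. if E u w then f w else 0)"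
    unfolding adj_def by (rule sum.swap)
  also have "\<dots> = (\<Sum>w\<in>V. real k * f w)"
  proof (rule sum.cong[OF refl])
    fix w assume w: "w \<in> V"
    have "(\<Sum>u\<in>V. if E u w then f w else 0) = (\<Sum>u\<in>V. f w * (if E w u then 1 else 0))"
      by (rule sum.cong) (auto dest: adj_sym)
    also have "\<dots> = f w * real (card {u\<in>V. E w u})"
      by (simp add: real_card_filter_eq_sum[OF finite_V] sum_distrib_left)
    finally show "(\<Sum>u\<in>V. if E u w then f w else 0) = real k * f w" using card_nbrs[OF w] by simp
  qed
  finally show ?thesis by (simp add: sum_distrib_left)
qed

lemma adj_adj:
  assumes u: "u \<in> V"
  shows "adj (adj f) u
    = (real k - real mu) * f u + (real lam - real mu) * adj f u + real mu * (\<Sum>w\<in>V. f w)"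
proof -
  have "adj (adj f) u = (\<Sum>w\<in>V. \<Sum>y\<in>V. if E u w \<and> E w y then f y else 0)"
    unfolding adj_def by (rule sum.cong) (auto intro: sum.cong)
  also have "\<dots> = (\<Sum>y\<in>V. \<Sum>w\<in>V. if E u w \<and> E w y then f y else 0)"
    by (rule sum.swap)
  also have "\<dots> = (\<Sum>y\<in>V. real (card {w\<in>V. E u w \<and> E y w}) * f y)"
  proof (rule sum.cong[OF refl])
    fix y
    have "(\<Sum>w\<in>V. if E u w \<and> E w y then f y else 0)
        = (\<Sum>w\<in>V. f y * (if E u w \<and> E y w then 1 else 0))"
      by (rule sum.cong) (auto dest: adj_sym)
    then show "(\<Sum>w\<in>V. if E u w \<and> E w y then f y else 0)
        = real (card {w\<in>V. E u w \<and> E y w}) * f y"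
      by (simp add: real_card_filter_eq_sum[OF finite_V] sum_distrib_left[symmetric] mult.commute)
  qed
  also have "\<dots> = (\<Sum>y\<in>V. real mu * f y + (if y = u then (real k - real mu) * f y else 0)
        + (if E u y then (real lam - real mu) * f y else 0))"
    by (rule sum.cong[OF refl]) (auto simp: card_common_nbrs[OF u] algebra_simps adj_irrefl)
  also have "\<dots> = (\<Sum>y\<in>V. real mu * f y) + (\<Sum>y\<in>V. if y = u then (real k - real mu) * f y else 0)
        + (\<Sum>y\<in>V. if E u y then (real lam - real mu) * f y else 0)"
    by (simp add: sum.distrib)
  also have "\<dots> = real mu * (\<Sum>w\<in>V. f w) + (real k - real mu) * f u
        + (real lam - real mu) * adj f u"
    using u finite_V by (simp add: sum_distrib_left adj_def if_distrib cong: if_cong)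
  finally show ?thesis by simp
qed

lemma eigenvalue_quadratic:
  assumes "adj_eigenvalue V E \<theta>" "\<theta> \<noteq> real k"
  shows "\<theta>\<^sup>2 = (real k - real mu) + (real lam - real mu) * \<theta>"
proof -
  obtain f u where u: "u \<in> V" "f u \<noteq> 0" and f: "\<And>w. w \<in> V \<Longrightarrow> adj f w = \<theta> * f w"
    using assms(1) unfolding adj_eigenvalue_iff by blast
  have "\<theta> * (\<Sum>w\<in>V. f w) = real k * (\<Sum>w\<in>V. f w)"
    using sum_adj[of f] f by (simp add: sum_distrib_left)
  then have sum0: "(\<Sum>w\<in>V. f w) = 0" using assms(2) by simp
  have "\<theta>\<^sup>2 * f u = adj (adj f) u"
  proof -
    have "adj (adj f) u = adj (\<lambda>w. \<theta> * f w) u" by (rule adj_cong) (simp add: f)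
    then show ?thesis using f[OF u(1)] by (simp add: adj_scale power2_eq_square)
  qed
  also have "\<dots> = ((real k - real mu) + (real lam - real mu) * \<theta>) * f u"
    using adj_adj[OF u(1), of f] f[OF u(1)] sum0 by (simp add: algebra_simps)
  finally show ?thesis using u(2) by simp
qed

lemma parameter_identity:
  assumes "V \<noteq> {}"
  shows "real k * (real k - real lam - 1) = real mu * (real v - real k - 1)"
proof -
  obtain u where u: "u \<in> V" using assms by blast
  have adj_one: "adj (\<lambda>_. 1) w = real k" if "w \<in> V" for w
  proof -
    have "adj (\<lambda>_. 1) w = real (card {x\<in>V. E w x})"
      unfolding adj_def by (simp add: real_card_filter_eq_sum[OF finite_V])
    then show ?thesis using card_nbrs[OF that] by simp
  qed
  have "adj (adj (\<lambda>_. 1)) u = adj (\<lambda>_. real k) u"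
    by (rule adj_cong) (simp add: adj_one)
  also have "\<dots> = real k * real k"
    using adj_scale[of "real k" "\<lambda>_. 1" u] adj_one[OF u] by simp
  finally have "real k * real k = (real k - real mu) + (real lam - real mu) * real k + real mu * real v"
    using adj_adj[OF u, of "\<lambda>_. 1"] adj_one[OF u] card_V by simp
  then show ?thesis by (simp add: algebra_simps)
qed

lemma opposite_eigenvalues:
  assumes "adj_eigenvalue V E a" "adj_eigenvalue V E (- a)" "0 < a" "a < real k"
  shows "lam = mu" "real mu = real k - a\<^sup>2"
proof -
  have "a\<^sup>2 = (real k - real mu) + (real lam - real mu) * a"
    using eigenvalue_quadratic[OF assms(1)] assms(4) by simp
  moreover have "(- a)\<^sup>2 = (real k - real mu) + (real lam - real mu) * - a"
    using eigenvalue_quadratic[OF assms(2)] assms(3,4) by simp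
  ultimately have "real lam - real mu = a + - a" "real k - real mu = - (a * - a)"
    using quadratic_common_roots[of a "real k - real mu" "real lam - real mu" "- a"] assms(3)
    by simp_all
  then show "lam = mu" "real mu = real k - a\<^sup>2" by (simp_all add: power2_eq_square)
qed

end

locale srg_coclique = srg +
  fixes C :: "'a set"
  assumes coclique: "coclique V E C"
begin

lemma C_subset: "C \<subseteq> V"
  and C_indep: "x \<in> C \<Longrightarrow> y \<in> C \<Longrightarrow> \<not> E x y"
  using coclique unfolding coclique_def by auto

lemma finite_C: "finite C"
  using C_subset finite_V finite_subset by blast

lemma card_common_nbrs_of_coclique:
  assumes "z \<in> C" "z' \<in> C"
  shows "card {x\<in>V - C. E x z \<and> E x z'} = (if z = z' then k else mu)"
proof -
  have "{x\<in>V - C. E x z \<and> E x z'} = {w\<in>V. E z w \<and> E z' w}"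
    using assms C_indep adj_in_V adj_sym by blast
  moreover have "z \<in> V" "z' \<in> V" using assms C_subset by auto
  ultimately show ?thesis using card_common_nbrs[of z z'] C_indep[OF assms] by simp
qed

lemma sum_card_nbrs_in:
  assumes "S \<subseteq> C"
  shows "(\<Sum>x\<in>V - C. real (card {z\<in>S. E x z})) = real (card S) * real k"
proof -
  have "(\<Sum>x\<in>V - C. real (card {z\<in>S. E x z})) = (\<Sum>z\<in>S. real (card {x\<in>V - C. E x z}))"
    by (rule sum_card_filter_swap) (use finite_V finite_C assms in \<open>auto intro: rev_finite_subset\<close>)
  also have "\<dots> = (\<Sum>z\<in>S. real k)"
  proof (rule sum.cong[OF refl])
    fix z assume "z \<in> S"
    then show "real (card {x\<in>V - C. E x z}) = real k"
      using card_common_nbrs_of_coclique[of z z] assms by auto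
  qed
  finally show ?thesis by simp
qed

lemma sum_sq_card_nbrs_in:
  assumes "S \<subseteq> C"
  shows "(\<Sum>x\<in>V - C. (real (card {z\<in>S. E x z}))\<^sup>2)
    = real (card S) * (real mu * real (card S) + real k - real mu)"
proof -
  have finS: "finite S" using assms finite_C rev_finite_subset by blast
  have "(\<Sum>x\<in>V - C. (real (card {z\<in>S. E x z}))\<^sup>2)
      = (\<Sum>x\<in>V - C. real (card {p\<in>S \<times> S. E x (fst p) \<and> E x (snd p)}))"
  proof (rule sum.cong[OF refl])
    fix x
    have "{p\<in>S \<times> S. E x (fst p) \<and> E x (snd p)} = {z\<in>S. E x z} \<times> {z\<in>S. E x z}" by auto
    then show "(real (card {z\<in>S. E x z}))\<^sup>2 = real (card {p\<in>S \<times> S. E x (fst p) \<and> E x (snd p)})"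
      by (simp add: card_cartesian_product power2_eq_square)
  qed
  also have "\<dots> = (\<Sum>p\<in>S \<times> S. real (card {x\<in>V - C. E x (fst p) \<and> E x (snd p)}))"
    by (rule sum_card_filter_swap) (use finite_V finS in auto)
  also have "\<dots> = (\<Sum>p\<in>S \<times> S. real (if fst p = snd p then k else mu))"
  proof (rule sum.cong[OF refl])
    fix p assume "p \<in> S \<times> S"
    then have "fst p \<in> C" "snd p \<in> C" using assms by auto
    then show "real (card {x\<in>V - C. E x (fst p) \<and> E x (snd p)}) = real (if fst p = snd p then k else mu)"
      by (intro arg_cong[where f = real] card_common_nbrs_of_coclique)
  qed
  also have "\<dots> = (\<Sum>z\<in>S. \<Sum>z'\<in>S. real mu + (if z = z' then real k - real mu else 0))"
    by (simp add: sum.cartesian_product case_prod_beta if_distrib cong: if_cong)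
  also have "\<dots> = (\<Sum>z\<in>S. real mu * real (card S) + (real k - real mu))"
    by (rule sum.cong[OF refl]) (simp add: sum.distrib finS)
  finally show ?thesis by (simp add: algebra_simps)
qed

lemma hoffman_coclique_mu:
  assumes "V \<noteq> {}" "real lam - real mu = r + s" "real k - real mu = - (r * s)"
    and "s \<noteq> real k" "real (card C) * (real k - s) = - s * real v"
  shows "real mu * real (card C) = (real k - r) * (- s)"
proof -
  have "real mu * real v = real k * (real k - real lam - 1) + real mu * (real k + 1)"
    using parameter_identity[OF assms(1)] by (simp add: algebra_simps)
  also have "\<dots> = (real k - r) * (real k - s)"
  proof -
    have "real lam = real mu + r + s" "real mu = real k + r * s" using assms(2,3) by simp_all
    then show ?thesis by (simp add: algebra_simps)
  qed
  finally have muv: "real mu * real v = (real k - r) * (real k - s)" .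
  have "(real k - s) * (real mu * real (card C)) = real mu * (real (card C) * (real k - s))"
    by (simp add: algebra_simps)
  also have "\<dots> = - s * (real mu * real v)"
    unfolding assms(5) by (simp add: algebra_simps)
  also have "\<dots> = (real k - s) * ((real k - r) * (- s))"
    unfolding muv by (simp add: algebra_simps)
  finally show ?thesis using assms(4) by (metis eq_iff_diff_eq_0 mult_cancel_left)
qed

lemma hoffman_coclique_nbrs:
  assumes "V \<noteq> {}" "real lam - real mu = r + s" "real k - real mu = - (r * s)"
    and "s \<noteq> real k" "real (card C) * (real k - s) = - s * real v"
    and x: "x \<in> V - C"
  shows "real (card {z\<in>C. E x z}) = - s"
proof -
  define d where "d y = real (card {z\<in>C. E y z})" for y
  define c where "c = real (card C)"
  have cW: "real (card (V - C)) = real v - c"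
    using C_subset finite_C card_V card_mono[OF finite_V C_subset] unfolding c_def
    by (simp add: card_Diff_subset of_nat_diff)
  have "(\<Sum>y\<in>V - C. (d y + s)\<^sup>2)
      = (\<Sum>y\<in>V - C. (d y)\<^sup>2) + 2 * s * (\<Sum>y\<in>V - C. d y) + s\<^sup>2 * (real v - c)"
    by (simp add: power2_sum sum.distrib sum_distrib_left cW algebra_simps)
  also have "\<dots> = c * (real mu * c) + c * (real k - real mu) + 2 * s * c * real k
      + s * (s * real v) - s\<^sup>2 * c"
    unfolding d_def c_def sum_card_nbrs_in[OF order_refl] sum_sq_card_nbrs_in[OF order_refl]
    by (simp add: algebra_simps power2_eq_square)
  also have "\<dots> = c * ((real k - r) * (- s)) + c * (- (r * s)) + 2 * s * c * real k
      + s * (- c * (real k - s)) - s\<^sup>2 * c"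
    using hoffman_coclique_mu[OF assms(1-5)] assms(3,5) unfolding c_def
    by (simp add: mult.commute)
  also have "\<dots> = 0" by (simp add: algebra_simps power2_eq_square)
  finally have "(\<Sum>y\<in>V - C. (d y + s)\<^sup>2) = 0" .
  then have "(d x + s)\<^sup>2 = 0" using x finite_V by (simp add: sum_nonneg_eq_0_iff)
  then show ?thesis unfolding d_def by simp
qed

lemma degree_in_complement:
  assumes "x \<in> V - C"
  shows "degree (V - C) (induced (V - C) E) x + card {z\<in>C. E x z} = k"
proof -
  have "degree (V - C) (induced (V - C) E) x = card {w\<in>V - C. E x w}"
    unfolding degree_def induced_def by (rule arg_cong[where f = card]) (use assms in auto)
  then show ?thesis
    using card_filter_Diff_split[OF finite_V C_subset, of "E x"] card_nbrs assms by auto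
qed

lemma common_nbrs_in_complement:
  assumes "x \<in> V - C" "y \<in> V - C"
  shows "common_nbrs (V - C) (induced (V - C) E) x y + card {z\<in>C. E x z \<and> E y z}
    = card {w\<in>V. E x w \<and> E y w}"
proof -
  have "common_nbrs (V - C) (induced (V - C) E) x y = card {w\<in>V - C. E x w \<and> E y w}"
    unfolding common_nbrs_def induced_def by (rule arg_cong[where f = card]) (use assms in auto)
  then show ?thesis
    using card_filter_Diff_split[OF finite_V C_subset, of "\<lambda>w. E x w \<and> E y w"] by simp
qed

lemma common_nbrs_in_complement_same_mu:
  assumes "lam = mu" "x \<in> V - C" "y \<in> V - C" "x \<noteq> y"
  shows "real (common_nbrs (V - C) (induced (V - C) E) x y)
    = real mu - real (card {z\<in>C. E x z \<and> E y z})"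
proof -
  have "card {w\<in>V. E x w \<and> E y w} = mu"
    using card_common_nbrs[of x y] assms by auto
  then show ?thesis using common_nbrs_in_complement[OF assms(2,3)] by (simp flip: of_nat_add)
qed

text \<open>Fix x0 outside C and let t y be the number of common C-neighbours of x0 and y. Then t is a
  at x0, \<open>mu - l1\<close> on the rest of the canonical class of x0 and \<open>mu - l2\<close> on the other
  classes; summing t and its square over the complement of C by double counting gives the two
  equations.\<close>

lemma ddg_on_complement_counts:
  assumes "lam = mu"
    and nbrs: "\<And>x. x \<in> V - C \<Longrightarrow> real (card {z\<in>C. E x z}) = a"
    and ddg: "proper_ddg (V - C) (induced (V - C) E) nV K l1 l2 m n"
  defines "N \<equiv> real (card (V - C))"
  shows "a + (real n - 1) * (real mu - real l1) + (N - real n) * (real mu - real l2) = a * real k"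
    and "a\<^sup>2 + (real n - 1) * (real mu - real l1)\<^sup>2 + (N - real n) * (real mu - real l2)\<^sup>2
      = a * (real mu * a + real k - real mu)"
proof -
  obtain P where fin: "finite (V - C)" and P: "partition_on (V - C) P" "\<And>X. X \<in> P \<Longrightarrow> card X = n"
    and l1: "\<And>X x y. X \<in> P \<Longrightarrow> x \<in> X \<Longrightarrow> y \<in> X \<Longrightarrow> x \<noteq> y
      \<Longrightarrow> common_nbrs (V - C) (induced (V - C) E) x y = l1"
    and l2: "\<And>X Y x y. X \<in> P \<Longrightarrow> Y \<in> P \<Longrightarrow> X \<noteq> Y \<Longrightarrow> x \<in> X \<Longrightarrow> y \<in> Y
      \<Longrightarrow> common_nbrs (V - C) (induced (V - C) E) x y = l2"
    and ne: "V - C \<noteq> {}"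
    using ddg by (rule proper_ddgE) blast
  obtain x0 where x0: "x0 \<in> V - C" using ne by blast
  obtain X0 where X0: "X0 \<in> P" "x0 \<in> X0" using P(1) x0 by (auto dest: partition_onD1)
  have X0W: "X0 \<subseteq> V - C" using X0(1) P(1) by (auto dest: partition_onD1)
  define S where "S = {z\<in>C. E x0 z}"
  define t where "t y = real (card {z\<in>S. E y z})" for y
  have SC: "S \<subseteq> C" unfolding S_def by auto
  have cardS: "real (card S) = a" using nbrs[OF x0] unfolding S_def .
  have t_x0: "t x0 = a" using cardS unfolding t_def S_def by simp
  have t_common: "t y = real mu - real (common_nbrs (V - C) (induced (V - C) E) x0 y)"
    if "y \<in> V - C" "y \<noteq> x0" for y
  proof -
    have "{z\<in>S. E y z} = {z\<in>C. E x0 z \<and> E y z}" unfolding S_def by auto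
    then show ?thesis using common_nbrs_in_complement_same_mu[OF \<open>lam = mu\<close> x0 that(1)] that(2)
      unfolding t_def by simp
  qed
  have t_in: "t y = real mu - real l1" if "y \<in> X0 - {x0}" for y
    using t_common[of y] l1[OF X0 _, of y] that X0W by force
  have t_out: "t y = real mu - real l2" if y: "y \<in> (V - C) - X0" for y
  proof -
    obtain Y where "Y \<in> P" "y \<in> Y" using P(1) y by (auto dest: partition_onD1)
    then have "common_nbrs (V - C) (induced (V - C) E) x0 y = l2"
      using l2[OF X0(1) _ _ X0(2)] y by blast
    then show ?thesis using t_common[of y] y X0(2) by force
  qed
  have cardX0: "real (card X0) = real n" using P(2)[OF X0(1)] by simp
  have "(\<Sum>y\<in>V - C. t y) = a * real k"
    using sum_card_nbrs_in[OF SC] cardS unfolding t_def by (simp add: mult.commute)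
  then show "a + (real n - 1) * (real mu - real l1) + (N - real n) * (real mu - real l2) = a * real k"
    using sum_three_valued[OF fin X0W X0(2), of t, OF t_x0 t_in t_out] cardX0 unfolding N_def by simp
  have "(\<Sum>y\<in>V - C. (t y)\<^sup>2) = a * (real mu * a + real k - real mu)"
    using sum_sq_card_nbrs_in[OF SC] cardS unfolding t_def by simp
  then show "a\<^sup>2 + (real n - 1) * (real mu - real l1)\<^sup>2 + (N - real n) * (real mu - real l2)\<^sup>2
      = a * (real mu * a + real k - real mu)"
    using sum_three_valued[OF fin X0W X0(2), of "\<lambda>y. (t y)\<^sup>2"] t_x0 t_in t_out cardX0
    unfolding N_def by simp
qed

lemma ddg_complement_parameters:
  assumes a: "0 < a" "a < real k" and lam_mu: "lam = mu" and mu: "real mu = real k - a\<^sup>2"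
    and c_v: "real (card C) * (real k + a) = a * real v"
    and ddg: "proper_ddg (V - C) (induced (V - C) E) nV K l1 l2 m n"
    and K_l1: "a\<^sup>2 = real K - real l1"
  shows "real (card C) = real m \<and> real v = a * ((real n)\<^sup>2 - 1) / (real n - a)
    \<and> real k = a * real n \<and> real mu = a * (real n - a)"
proof -
  obtain x where x: "x \<in> V - C" and deg: "degree (V - C) (induced (V - C) E) x = K"
    and "l1 \<noteq> l2"
    using ddg by (rule proper_ddgE) blast
  then have V: "V \<noteq> {}" by blast
  have roots: "real lam - real mu = a + - a" "real k - real mu = - (a * - a)" "- a \<noteq> real k"
    and c_v': "real (card C) * (real k - - a) = - (- a) * real v"
    using lam_mu mu a c_v by (simp_all add: power2_eq_square)
  have nbrs: "real (card {z\<in>C. E y z}) = a" if "y \<in> V - C" for y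
    using hoffman_coclique_nbrs[OF V roots c_v' that] by simp
  have cmu: "real (card C) * real mu = a * (real k - a)"
    using hoffman_coclique_mu[OF V roots c_v'] by (simp add: algebra_simps)
  have N: "real (card (V - C)) = real v - real (card C)"
    using C_subset finite_C card_V card_mono[OF finite_V C_subset]
    by (simp add: card_Diff_subset of_nat_diff)
  have Na: "real (card (V - C)) * a = real (card C) * real k"
    using c_v unfolding N by (simp add: algebra_simps)
  have "real K = real k - a"
    using degree_in_complement[OF x] nbrs[OF x] deg by (simp flip: of_nat_add)
  then have l1: "real mu - real l1 = a" using mu K_l1 by simp
  have e1: "real n * a + (real (card (V - C)) - real n) * (real mu - real l2) = a * real k"
    using ddg_on_complement_counts(1)[OF lam_mu nbrs ddg] l1 by (simp add: algebra_simps)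
  have e2: "real n * a\<^sup>2 + (real (card (V - C)) - real n) * (real mu - real l2)\<^sup>2
      = a * (real mu * a + real k - real mu)"
    using ddg_on_complement_counts(2)[OF lam_mu nbrs ddg] l1 by (simp add: algebra_simps)
  have t: "real mu - real l2 \<noteq> a" using l1 \<open>l1 \<noteq> l2\<close> by simp
  have W: "real (card (V - C)) = real m * real n" "2 \<le> real m" "2 \<le> real n"
    using proper_ddg_card[OF ddg] by simp_all
  have v: "real v = real (card (V - C)) + real (card C)" using N by simp
  show ?thesis by (rule ddg_parameters_from_counts[OF a(1) mu cmu Na v W t e1 e2])
qed

end

theorem mainTheorem8:
  fixes V :: "'a set" and E :: "'a \<Rightarrow> 'a \<Rightarrow> bool" and C :: "'a set"
    and v k lam mu :: nat and r s :: real
    and nV K l1 l2 m n :: nat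
  assumes srg: "strongly_regular V E v k lam mu"
    and prim: "primitive V E"
    and spec: "srg_spectrum V E k r s"
    and cocl: "coclique V E C"
    and csize: "real (card C) = real v * s / (s - real k)"
    and ddg: "proper_ddg (V - C) (induced (V - C) E) nV K l1 l2 m n"
    and hr: "r = sqrt (real K - real l1)"
    and hs: "s = - sqrt (real K - real l1)"
  shows "real (card C) = real m
    \<and> real v = (- s) * (real n ^ 2 - 1) / (real n + s)
    \<and> real k = (- s) * real n
    \<and> real lam = (- s) * (real n + s)
    \<and> real mu = (- s) * (real n + s)"
proof -
  interpret srg_coclique V E v k lam mu C
    using srg cocl by (simp add: srg_coclique_def srg_coclique_axioms_def srg_def)
  define a where "a = sqrt (real K - real l1)"
  have s: "s = - a" using hs a_def by simp
  have eig: "adj_eigenvalue V E a" "adj_eigenvalue V E (- a)" and "- a < a" "a < real k"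
    using spec unfolding srg_spectrum_def hr hs a_def by auto
  then have a: "0 < a" by simp
  have K_l1: "a\<^sup>2 = real K - real l1"
    using a unfolding a_def by (simp add: real_sqrt_gt_0_iff)
  note eig_params = opposite_eigenvalues[OF eig a \<open>a < real k\<close>]
  have "real (card C) * (real k + a) = a * real v"
    using csize a \<open>a < real k\<close> unfolding s by (simp add: field_simps)
  from ddg_complement_parameters[OF a \<open>a < real k\<close> eig_params this ddg K_l1]
  show ?thesis unfolding s eig_params(1) by simp
qed

end
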